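(* Assume $e_{-1}+e_{+1}<1$ and $\delta_{\tilde p}\neq 0$, and let $\alpha=1-(1-e_{-1}-e_{+1})\cdot\frac{\delta_p}{\delta_{\tilde p}}$. Then there is a constant $c>0$ such that for any measurable classifiers $f,f':\mathcal X\to\{-1,+1\}$, $$\mathbb E_{\tilde{\mathcal D}}[\mathbb 1_{\alpha\text{-peer}}(f(X),\tilde Y)]-\mathbb E_{\tilde{\mathcal D}}[\mathbb 1_{\alpha\text{-peer}}(f'(X),\tilde Y)]=c\,(1-e_{-1}-e_{+1})\bigl(\mathbb E_{\mathcal D}[\mathbb 1(f(X),Y)]-\mathbb E_{\mathcal D}[\mathbb 1(f'(X),Y)]\bigr).$$
   Context: Let $\mathcal X\subseteq\mathbb R^d$ and let $(X,Y)$ be a random pair with distribution $\mathcal D$ on $\mathcal X\times\{-1,+1\}$, with $p:=\mathbb P(Y=+1)\in(0,1)$. A noisy label $\tilde Y\in\{-1,+1\}$ is generated with noise rates $e_{+1}:=\mathbb P(\tilde Y=-1\mid Y=+1)$, $e_{-1}:=\mathbb P(\tilde Y=+1\mid Y=-1)$, where $\tilde Y$ is conditionally independent of $X$ given $Y$; $\tilde{\mathcal D}$ is the distribution of $(X,\tilde Y)$. Let $\delta_p:=\mathbb P(Y=+1)-\mathbb P(Y=-1)$ and $\delta_{\tilde p}:=\mathbb P(\tilde Y=+1)-\mathbb P(\tilde Y=-1)$. The 0-1 loss is $\mathbb 1(a,b)=1$ if $a\neq b$ and $0$ otherwise. For a weight $\alpha$, $$\mathbb E_{\tilde{\mathcal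 D}}[\mathbb 1_{\alpha\text{-peer}}(f(X),\tilde Y)]:=\mathbb E[\mathbb 1(f(X),\tilde Y)]-\alpha\,\mathbb E[\mathbb 1(f(X_1),\tilde Y_2)],$$ where $(X,\tilde Y),(X_1,\tilde Y_1),(X_2,\tilde Y_2)$ are i.i.d. draws from $\tilde{\mathcal D}$. *)

theory Defs
  imports "HOL-Probability.Probability"
begin

text \<open>Labels are integers in {-1, +1}. The 0-1 loss.\<close>
definition zero_one :: "int \<Rightarrow> int \<Rightarrow> real" where
  "zero_one a b = (if a \<noteq> b then 1 else 0)"

definition noisy_distr ::
  "'w measure \<Rightarrow> ('w \<Rightarrow> real^'d) \<Rightarrow> ('w \<Rightarrow> int) \<Rightarrow> ((real^'d) \<times> int) measure" where
  "noisy_distr M X Yt = distr M (borel \<Otimes>\<^sub>M count_space UNIV) (\<lambda>w. (X w, Yt w))"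

text \<open>Expected alpha-peer 0-1 loss under the noisy distribution:
  E[1(f X, Yt)] - alpha * E[1(f X1, Yt2)] with (X1,Yt1),(X2,Yt2) i.i.d. copies.\<close>
definition peer_risk ::
  "'w measure \<Rightarrow> ('w \<Rightarrow> real^'d) \<Rightarrow> ('w \<Rightarrow> int) \<Rightarrow> real \<Rightarrow> (real^'d \<Rightarrow> int) \<Rightarrow> real" where
  "peer_risk M X Yt \<alpha> f =
     (\<integral>w. zero_one (f (X w)) (Yt w) \<partial>M)
     - \<alpha> * (\<integral>z. zero_one (f (fst (fst z))) (snd (snd z))
               \<partial>(noisy_distr M X Yt \<Otimes>\<^sub>M noisy_distr M X Yt))"

end

theory Submission
  imports Defs
begin

text \<open>Write a(s, y) for the probability that the classifier predicts s while the clean label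
  is y. Conditional independence makes the noisy risk E[1(f X, noisy Y)] a combination of the four
  masses a(s, y) with the noise rates as coefficients, and independence of the two copies turns
  the peer term into P(f X = 1) P(noisy Y = -1) + P(f X = -1) P(noisy Y = 1). For the given weight
  alpha the dependence on P(f X = 1) cancels, so the peer risk equals (1 - e_{-1} - e_{+1}) times the
  clean risk plus a quantity that does not depend on f; the claim therefore holds with c = 1.\<close>

lemma measurable_borel_count_space:
  fixes f :: "'a \<Rightarrow> 'b::{countable, t2_space}"
  shows "f \<in> borel_measurable M \<Longrightarrow> f \<in> M \<rightarrow>\<^sub>M count_space UNIV"
  by (simp add: measurable_cong_sets[OF refl sets_borel_eq_count_space, symmetric])

lemma (in sigma_finite_measure) measure_pair_measure_Times:
  "A \<in> sets N \<Longrightarrow> B \<in> sets M \<Longrightarrow> measure (N \<Otimes>\<^sub>M M) (A \<times> B) = measure N A * measure M B"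
  by (simp add: measure_def emeasure_pair_measure_Times enn2real_mult)

lemma (in finite_measure) integral_zero_one:
  assumes [measurable]: "g \<in> M \<rightarrow>\<^sub>M count_space UNIV" "L \<in> M \<rightarrow>\<^sub>M count_space UNIV"
    and binary: "\<forall>w\<in>space M. g w \<in> {-1, 1}"
  shows "(\<integral>w. zero_one (g w) (L w) \<partial>M)
    = measure M {w\<in>space M. g w = 1 \<and> L w \<noteq> 1} + measure M {w\<in>space M. g w = -1 \<and> L w \<noteq> -1}"
proof -
  let ?S = "{w\<in>space M. g w = 1 \<and> L w \<noteq> 1}" and ?T = "{w\<in>space M. g w = -1 \<and> L w \<noteq> -1}"
  have "(\<integral>w. zero_one (g w) (L w) \<partial>M) = (\<integral>w. indicator ?S w + indicator ?T w \<partial>M)"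
    using binary by (intro Bochner_Integration.integral_cong) (auto simp: zero_one_def indicator_def)
  also have "\<dots> = measure M ?S + measure M ?T"
    by (subst Bochner_Integration.integral_add) (auto simp: integrable_indicator_iff less_top[symmetric])
  finally show ?thesis .
qed

lemma (in finite_measure) integral_zero_one_binary:
  assumes "g \<in> M \<rightarrow>\<^sub>M count_space UNIV" "L \<in> M \<rightarrow>\<^sub>M count_space UNIV"
    and binary: "\<forall>w\<in>space M. g w \<in> {-1, 1} \<and> L w \<in> {-1, 1}"
  shows "(\<integral>w. zero_one (g w) (L w) \<partial>M)
    = measure M {w\<in>space M. g w = 1 \<and> L w = -1} + measure M {w\<in>space M. g w = -1 \<and> L w = 1}"
proof -
  have "{w\<in>space M. g w = 1 \<and> L w \<noteq> 1} = {w\<in>space M. g w = 1 \<and> L w = -1}"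
    "{w\<in>space M. g w = -1 \<and> L w \<noteq> -1} = {w\<in>space M. g w = -1 \<and> L w = 1}"
    using binary by auto
  then show ?thesis
    using integral_zero_one assms by simp
qed

lemma (in prob_space) prob_split_binary:
  assumes [measurable]: "Measurable.pred M P" "L \<in> M \<rightarrow>\<^sub>M count_space UNIV"
    and binary: "\<forall>w\<in>space M. L w \<in> {-1, 1 :: int}"
  shows "prob {w\<in>space M. P w} = prob {w\<in>space M. P w \<and> L w = 1} + prob {w\<in>space M. P w \<and> L w = -1}"
proof -
  have "{w\<in>space M. P w} = {w\<in>space M. P w \<and> L w = 1} \<union> {w\<in>space M. P w \<and> L w = -1}"
    using binary by auto
  then show ?thesis
    by (simp add: finite_measure_Union[symmetric] disjoint_iff)
qed

text \<open>The difference of the two sides is a multiple of a1 + am, the probability of predicting +1;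
  the hypothesis on alpha says precisely that the multiplier vanishes.\<close>

lemma peer_risk_algebra:
  fixes a1 am b1 bm p1 pm ep em \<alpha> :: real
  defines "q1 \<equiv> p1 * (1 - ep) + pm * em" and "qm \<equiv> p1 * ep + pm * (1 - em)"
  assumes "a1 + b1 = p1" "am + bm = pm" "p1 + pm = 1"
    and \<alpha>: "\<alpha> * (q1 - qm) = (q1 - qm) - (1 - em - ep) * (p1 - pm)"
  shows "a1 * ep + am * (1 - em) + b1 * (1 - ep) + bm * em - \<alpha> * ((a1 + am) * qm + (b1 + bm) * q1)
    = (1 - em - ep) * (am + b1) + (1 - \<alpha>) * q1 - (1 - em - ep) * p1"
proof -
  have "a1 * ep + am * (1 - em) + b1 * (1 - ep) + bm * em - \<alpha> * ((a1 + am) * qm + (b1 + bm) * q1)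
      - ((1 - em - ep) * (am + b1) + (1 - \<alpha>) * q1 - (1 - em - ep) * p1)
    = (a1 + am) * (\<alpha> * (q1 - qm) - (q1 - qm) + (1 - em - ep) * (p1 - pm))"
  proof -
    have b: "b1 = p1 - a1" "bm = pm - am" and pm: "pm = 1 - p1" using assms(3-5) by linarith+
    show ?thesis unfolding q1_def qm_def b pm by (simp add: algebra_simps)
  qed
  then show ?thesis using \<alpha> by simp
qed

locale noisy_label_model = prob_space M
  for M :: "'w measure" and X :: "'w \<Rightarrow> real^'d" and Y Yt :: "'w \<Rightarrow> int" +
  assumes measurable_X [measurable]: "X \<in> borel_measurable M"
    and measurable_Y [measurable]: "Y \<in> M \<rightarrow>\<^sub>M count_space UNIV"
    and measurable_Yt [measurable]: "Yt \<in> M \<rightarrow>\<^sub>M count_space UNIV"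
    and Y_binary: "\<forall>w\<in>space M. Y w \<in> {-1, 1}"
    and Yt_binary: "\<forall>w\<in>space M. Yt w \<in> {-1, 1}"
    and prob_Y_pos: "0 < prob {w\<in>space M. Y w = 1}"
    and prob_Y_less_1: "prob {w\<in>space M. Y w = 1} < 1"
    and cond_indep: "\<forall>A\<in>sets (borel :: (real^'d) measure). \<forall>y t.
      prob {w\<in>space M. X w \<in> A \<and> Y w = y \<and> Yt w = t} * prob {w\<in>space M. Y w = y}
      = prob {w\<in>space M. X w \<in> A \<and> Y w = y} * prob {w\<in>space M. Y w = y \<and> Yt w = t}"
begin

definition noise_rate :: "int \<Rightarrow> int \<Rightarrow> real" where
  "noise_rate y t = prob {w\<in>space M. Y w = y \<and> Yt w = t} / prob {w\<in>space M. Y w = y}"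

lemma prob_Y_sum: "prob {w\<in>space M. Y w = 1} + prob {w\<in>space M. Y w = -1} = 1"
  using prob_split_binary[of "\<lambda>_. True" Y] Y_binary by (simp add: prob_space)

lemma prob_Y_gt_0: "y \<in> {-1, 1} \<Longrightarrow> 0 < prob {w\<in>space M. Y w = y}"
  using prob_Y_pos prob_Y_less_1 prob_Y_sum by auto

lemma noise_rate_sum: "y \<in> {-1, 1} \<Longrightarrow> noise_rate y 1 + noise_rate y (-1) = 1"
  using prob_split_binary[of "\<lambda>w. Y w = y" Yt] Yt_binary prob_Y_gt_0[of y]
  by (simp add: noise_rate_def add_divide_distrib[symmetric])

lemma prob_X_Yt_Y:
  assumes "A \<in> sets borel" "y \<in> {-1, 1}"
  shows "prob {w\<in>space M. X w \<in> A \<and> Yt w = t \<and> Y w = y}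
    = prob {w\<in>space M. X w \<in> A \<and> Y w = y} * noise_rate y t"
  using cond_indep assms prob_Y_gt_0[of y]
  by (simp add: noise_rate_def conj_commute eq_divide_eq)

lemma prob_X_Yt:
  assumes [measurable]: "A \<in> sets borel"
  shows "prob {w\<in>space M. X w \<in> A \<and> Yt w = t}
    = prob {w\<in>space M. X w \<in> A \<and> Y w = 1} * noise_rate 1 t
    + prob {w\<in>space M. X w \<in> A \<and> Y w = -1} * noise_rate (-1) t"
  using prob_split_binary[of "\<lambda>w. X w \<in> A \<and> Yt w = t" Y] Y_binary
  by (simp add: prob_X_Yt_Y)

lemma prob_space_noisy_distr: "prob_space (noisy_distr M X Yt)"
  unfolding noisy_distr_def by (rule prob_space_distr) measurable

lemma measure_noisy_distr_Times:
  assumes [measurable]: "A \<in> sets borel"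
  shows "measure (noisy_distr M X Yt) (A \<times> B) = prob {w\<in>space M. X w \<in> A \<and> Yt w \<in> B}"
  unfolding noisy_distr_def by (subst measure_distr) (auto intro!: arg_cong[where f = prob])

lemma peer_term_eq:
  fixes f :: "real^'d \<Rightarrow> int"
  assumes f_measurable: "f \<in> borel_measurable borel" and f_binary: "\<forall>x. f x \<in> {-1, 1}"
  shows "(\<integral>z. zero_one (f (fst (fst z))) (snd (snd z)) \<partial>(noisy_distr M X Yt \<Otimes>\<^sub>M noisy_distr M X Yt))
    = prob {w\<in>space M. f (X w) = 1} * prob {w\<in>space M. Yt w = -1}
    + prob {w\<in>space M. f (X w) = -1} * prob {w\<in>space M. Yt w = 1}"
proof -
  define D where "D = noisy_distr M X Yt"
  interpret D: prob_space D
    unfolding D_def by (rule prob_space_noisy_distr)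
  interpret DD: pair_prob_space D D ..
  have sets_D [measurable_cong]: "sets D = sets (borel \<Otimes>\<^sub>M count_space UNIV)"
    by (simp add: D_def noisy_distr_def)
  have space_DD: "space (D \<Otimes>\<^sub>M D) = UNIV"
    by (simp add: space_pair_measure sets_eq_imp_space_eq[OF sets_D])
  have f_count [measurable]: "f \<in> borel \<rightarrow>\<^sub>M count_space UNIV"
    using f_measurable by (rule measurable_borel_count_space)
  have measure_rectangle: "measure (D \<Otimes>\<^sub>M D) {z. f (fst (fst z)) = s \<and> snd (snd z) \<noteq> t}
      = prob {w\<in>space M. f (X w) = s} * prob {w\<in>space M. Yt w \<noteq> t}" for s t
  proof -
    have level_set: "f -` {s} \<in> sets borel"
      using borel_measurable_vimage[OF f_measurable, of s] by simp
    then have rectangle_sides: "f -` {s} \<times> UNIV \<in> sets D" "UNIV \<times> - {t} \<in> sets D"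
      unfolding sets_D by auto
    have rectangle: "{z. f (fst (fst z)) = s \<and> snd (snd z) \<noteq> t} = (f -` {s} \<times> UNIV) \<times> (UNIV \<times> - {t})"
      by auto
    have "measure (D \<Otimes>\<^sub>M D) {z. f (fst (fst z)) = s \<and> snd (snd z) \<noteq> t}
        = measure D (f -` {s} \<times> UNIV) * measure D (UNIV \<times> - {t})"
      unfolding rectangle by (rule D.measure_pair_measure_Times[OF rectangle_sides])
    also have "\<dots> = prob {w\<in>space M. f (X w) = s} * prob {w\<in>space M. Yt w \<noteq> t}"
      using measure_noisy_distr_Times[OF level_set] measure_noisy_distr_Times[of UNIV]
      by (simp add: D_def)
    finally show ?thesis .
  qed
  have "{w\<in>space M. Yt w \<noteq> 1} = {w\<in>space M. Yt w = -1}"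
    "{w\<in>space M. Yt w \<noteq> -1} = {w\<in>space M. Yt w = 1}"
    using Yt_binary by auto
  \<comment> \<open>On the product space the label coordinate is binary only almost surely, hence the
    form of the risk formula that assumes nothing about the label.\<close>
  then show ?thesis
    unfolding D_def[symmetric]
    by (subst DD.P.integral_zero_one) (use f_binary in \<open>auto simp: space_DD measure_rectangle\<close>)
qed

lemma noisy_risk_eq:
  fixes f :: "real^'d \<Rightarrow> int"
  assumes f_measurable: "f \<in> borel_measurable borel" and f_binary: "\<forall>x. f x \<in> {-1, 1}"
  shows "(\<integral>w. zero_one (f (X w)) (Yt w) \<partial>M)
    = prob {w\<in>space M. f (X w) = 1 \<and> Y w = 1} * noise_rate 1 (-1)
    + prob {w\<in>space M. f (X w) = 1 \<and> Y w = -1} * noise_rate (-1) (-1)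
    + prob {w\<in>space M. f (X w) = -1 \<and> Y w = 1} * noise_rate 1 1
    + prob {w\<in>space M. f (X w) = -1 \<and> Y w = -1} * noise_rate (-1) 1"
proof -
  have [measurable]: "(\<lambda>w. f (X w)) \<in> M \<rightarrow>\<^sub>M count_space UNIV"
    using measurable_compose[OF measurable_X f_measurable] by (rule measurable_borel_count_space)
  have "prob {w\<in>space M. f (X w) = s \<and> Yt w = t}
      = prob {w\<in>space M. f (X w) = s \<and> Y w = 1} * noise_rate 1 t
      + prob {w\<in>space M. f (X w) = s \<and> Y w = -1} * noise_rate (-1) t" for s t
    using prob_X_Yt[of "f -` {s}" t] borel_measurable_vimage[OF f_measurable, of s] by simp
  then show ?thesis
    using f_binary Yt_binary by (simp add: integral_zero_one_binary)
qed

lemma peer_risk_eq: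
  fixes f :: "real^'d \<Rightarrow> int"
  defines "ep \<equiv> noise_rate 1 (-1)" and "em \<equiv> noise_rate (-1) 1"
    and "p \<equiv> \<lambda>y. prob {w\<in>space M. Y w = y}" and "q \<equiv> \<lambda>t. prob {w\<in>space M. Yt w = t}"
  assumes f_measurable: "f \<in> borel_measurable borel" and f_binary: "\<forall>x. f x \<in> {-1, 1}"
    and \<alpha>: "\<alpha> * (q 1 - q (-1)) = (q 1 - q (-1)) - (1 - em - ep) * (p 1 - p (-1))"
  shows "peer_risk M X Yt \<alpha> f
    = (1 - em - ep) * (\<integral>w. zero_one (f (X w)) (Y w) \<partial>M) + (1 - \<alpha>) * q 1 - (1 - em - ep) * p 1"
proof -
  define a where "a s y = prob {w\<in>space M. f (X w) = s \<and> Y w = y}" for s y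
  have [measurable]: "(\<lambda>w. f (X w)) \<in> M \<rightarrow>\<^sub>M count_space UNIV"
    using measurable_compose[OF measurable_X f_measurable] by (rule measurable_borel_count_space)
  have class_split: "a 1 y + a (-1) y = p y" for y
    using prob_split_binary[of "\<lambda>w. Y w = y" "\<lambda>w. f (X w)"] f_binary
    by (simp add: a_def p_def conj_commute)
  have prediction_split: "prob {w\<in>space M. f (X w) = s} = a s 1 + a s (-1)" for s
    using prob_split_binary[of "\<lambda>w. f (X w) = s" Y] Y_binary by (simp add: a_def)
  have noisy_label: "q 1 = p 1 * (1 - ep) + p (-1) * em" "q (-1) = p 1 * ep + p (-1) * (1 - em)"
    using prob_X_Yt[of UNIV 1] prob_X_Yt[of UNIV "-1"] noise_rate_sum[of 1] noise_rate_sum[of "-1"]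
    by (simp_all add: p_def q_def ep_def em_def)
  have "peer_risk M X Yt \<alpha> f
      = a 1 1 * ep + a 1 (-1) * (1 - em) + a (-1) 1 * (1 - ep) + a (-1) (-1) * em
        - \<alpha> * ((a 1 1 + a 1 (-1)) * q (-1) + (a (-1) 1 + a (-1) (-1)) * q 1)"
  proof -
    have "noise_rate 1 1 = 1 - ep" "noise_rate (-1) (-1) = 1 - em"
      using noise_rate_sum[of 1] noise_rate_sum[of "-1"] by (simp_all add: ep_def em_def)
    then show ?thesis
      unfolding peer_risk_def peer_term_eq[OF f_measurable f_binary]
        noisy_risk_eq[OF f_measurable f_binary] prediction_split
      by (simp add: a_def q_def ep_def em_def)
  qed
  also have "\<dots> = (1 - em - ep) * (a 1 (-1) + a (-1) 1) + (1 - \<alpha>) * q 1 - (1 - em - ep) * p 1"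
    unfolding noisy_label
  proof (rule peer_risk_algebra[OF class_split class_split])
    show "p 1 + p (-1) = 1"
      using prob_Y_sum by (simp add: p_def)
    show "\<alpha> * (p 1 * (1 - ep) + p (-1) * em - (p 1 * ep + p (-1) * (1 - em)))
      = p 1 * (1 - ep) + p (-1) * em - (p 1 * ep + p (-1) * (1 - em)) - (1 - em - ep) * (p 1 - p (-1))"
      using \<alpha> unfolding noisy_label .
  qed
  also have "a 1 (-1) + a (-1) 1 = (\<integral>w. zero_one (f (X w)) (Y w) \<partial>M)"
    using f_binary Y_binary by (simp add: integral_zero_one_binary a_def)
  finally show ?thesis .
qed

end

theorem proposition1:
  fixes M :: "'w measure" and X :: "'w \<Rightarrow> real^'d" and Y Yt :: "'w \<Rightarrow> int"
  assumes "prob_space M"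
    and "X \<in> borel_measurable M"
    and "Y \<in> measurable M (count_space UNIV)"
    and "Yt \<in> measurable M (count_space UNIV)"
    and "\<forall>w\<in>space M. Y w \<in> {-1, 1}"
    and "\<forall>w\<in>space M. Yt w \<in> {-1, 1}"
    and "0 < measure M {w\<in>space M. Y w = 1}"
    and "measure M {w\<in>space M. Y w = 1} < 1"
    \<comment> \<open>noisy label conditionally independent of X given Y\<close>
    and "\<forall>A\<in>sets (borel :: (real^'d) measure). \<forall>y yt.
           measure M {w\<in>space M. X w \<in> A \<and> Y w = y \<and> Yt w = yt} * measure M {w\<in>space M. Y w = y}
         = measure M {w\<in>space M. X w \<in> A \<and> Y w = y} * measure M {w\<in>space M. Y w = y \<and> Yt w = yt}"
    and "ep = measure M {w\<in>space M. Y w = 1 \<and> Yt w = -1} / measure M {w\<in>space M. Y w = 1}"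
    and "em = measure M {w\<in>space M. Y w = -1 \<and> Yt w = 1} / measure M {w\<in>space M. Y w = -1}"
    and "dp = measure M {w\<in>space M. Y w = 1} - measure M {w\<in>space M. Y w = -1}"
    and "dpt = measure M {w\<in>space M. Yt w = 1} - measure M {w\<in>space M. Yt w = -1}"
    and "em + ep < 1"
    and "dpt \<noteq> 0"
    and "\<alpha> = 1 - (1 - em - ep) * (dp / dpt)"
  shows "\<exists>c>0. \<forall>f f' :: real^'d \<Rightarrow> int.
           f \<in> borel_measurable borel \<longrightarrow> f' \<in> borel_measurable borel \<longrightarrow>
           (\<forall>x. f x \<in> {-1, 1}) \<longrightarrow> (\<forall>x. f' x \<in> {-1, 1}) \<longrightarrow>
           peer_risk M X Yt \<alpha> f - peer_risk M X Yt \<alpha> f'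
           = c * (1 - em - ep) *
             ((\<integral>w. zero_one (f (X w)) (Y w) \<partial>M) - (\<integral>w. zero_one (f' (X w)) (Y w) \<partial>M))"
proof -
  interpret noisy_label_model M X Y Yt
    using assms(1-9) unfolding noisy_label_model_def noisy_label_model_axioms_def by blast
  have ep_em: "ep = noise_rate 1 (-1)" "em = noise_rate (-1) 1"
    using assms(10,11) by (simp_all add: noise_rate_def)
  have "\<alpha> * dpt = dpt - (1 - em - ep) * dp"
    using assms(15,16) by (simp add: field_simps)
  note \<alpha> = this[unfolded assms(12,13) ep_em]
  show ?thesis
  proof (intro exI[of _ 1] conjI allI impI)
    fix f f' :: "real^'d \<Rightarrow> int"
    assume "f \<in> borel_measurable borel" "f' \<in> borel_measurable borel"
      and "\<forall>x. f x \<in> {-1, 1}" "\<forall>x. f' x \<in> {-1, 1}"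
    note risks = peer_risk_eq[OF \<open>f \<in> _\<close> \<open>\<forall>x. f x \<in> _\<close> \<alpha>] peer_risk_eq[OF \<open>f' \<in> _\<close> \<open>\<forall>x. f' x \<in> _\<close> \<alpha>]
    show "peer_risk M X Yt \<alpha> f - peer_risk M X Yt \<alpha> f'
      = 1 * (1 - em - ep) * ((\<integral>w. zero_one (f (X w)) (Y w) \<partial>M) - (\<integral>w. zero_one (f' (X w)) (Y w) \<partial>M))"
      unfolding risks ep_em by (simp add: algebra_simps)
  qed simp
qed

end
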